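(* Let $d$ be an integer and let $G$ be a finite connected $d$-regular simple graph containing no cycle of length $3$ and no cycle of length $5$ as a subgraph. If $uv$ is an edge of $G$ with $\kappa_{LLY}(u,v)>0$, then there is a perfect matching between $N(u)\setminus\{v\}$ and $N(v)\setminus\{u\}$ using edges of $G$.
   Context: For vertices $u,v$ of a connected graph $G$, $d(u,v)$ is the graph distance, $N(v)$ is the neighborhood of $v$, $d_v=|N(v)|$. For $0\le\alpha<1$, the $\alpha$-lazy random walk is $m_x^\alpha(x)=\alpha$, $m_x^\alpha(v)=(1-\alpha)/d_x$ for $v\in N(x)$, $m_x^\alpha(v)=0$ otherwise. The transportation distance between probability distributions $m_1,m_2$ on $V(G)$ is $W(m_1,m_2)=\inf_A\sum_{x,y}A(x,y)d(x,y)$ over couplings $A:V\times V\to[0,1]$ with $\sum_yA(x,y)=m_1(x)$, $\sum_xA(x,y)=m_2(y)$. For distinct $x,y$, $\kappa_\alpha(x,y)=1-W(m_x^\alpha,m_y^\alpha)/d(x,y)$ and $\kappa_{LLY}(x,y)=\lim_{\alpha\to1}\kappa_\alpha(x,y)/(1-\alpha)$. *)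

theory Defs
  imports "HOL-Analysis.Analysis"
begin

definition simple_graph :: "'a set \<Rightarrow> ('a \<Rightarrow> 'a \<Rightarrow> bool) \<Rightarrow> bool" where
  "simple_graph V E \<longleftrightarrow> finite V \<and> (\<forall>x y. E x y \<longrightarrow> x \<in> V \<and> y \<in> V)
     \<and> (\<forall>x y. E x y \<longrightarrow> E y x) \<and> (\<forall>x. \<not> E x x)"

definition connected_graph :: "'a set \<Rightarrow> ('a \<Rightarrow> 'a \<Rightarrow> bool) \<Rightarrow> bool" where
  "connected_graph V E \<longleftrightarrow> V \<noteq> {} \<and> (\<forall>x\<in>V. \<forall>y\<in>V. \<exists>n. (E ^^ n) x y)"

definition gdist :: "('a \<Rightarrow> 'a \<Rightarrow> bool) \<Rightarrow> 'a \<Rightarrow> 'a \<Rightarrow> nat" where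
  "gdist E x y = (LEAST n. (E ^^ n) x y)"

definition nbhd :: "'a set \<Rightarrow> ('a \<Rightarrow> 'a \<Rightarrow> bool) \<Rightarrow> 'a \<Rightarrow> 'a set" where
  "nbhd V E v = {w \<in> V. E v w}"

definition regular_graph :: "'a set \<Rightarrow> ('a \<Rightarrow> 'a \<Rightarrow> bool) \<Rightarrow> nat \<Rightarrow> bool" where
  "regular_graph V E d \<longleftrightarrow> (\<forall>v\<in>V. card (nbhd V E v) = d)"

definition has_C3 :: "'a set \<Rightarrow> ('a \<Rightarrow> 'a \<Rightarrow> bool) \<Rightarrow> bool" where
  "has_C3 V E \<longleftrightarrow> (\<exists>a b c. distinct [a,b,c] \<and> E a b \<and> E b c \<and> E c a)"

definition has_C5 :: "'a set \<Rightarrow> ('a \<Rightarrow> 'a \<Rightarrow> bool) \<Rightarrow> bool" where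
  "has_C5 V E \<longleftrightarrow> (\<exists>a b c p q. distinct [a,b,c,p,q] \<and> E a b \<and> E b c \<and> E c p \<and> E p q \<and> E q a)"

definition lazy_walk :: "'a set \<Rightarrow> ('a \<Rightarrow> 'a \<Rightarrow> bool) \<Rightarrow> real \<Rightarrow> 'a \<Rightarrow> 'a \<Rightarrow> real" where
  "lazy_walk V E \<alpha> x v =
     (if v = x then \<alpha> else if v \<in> nbhd V E x then (1 - \<alpha>) / real (card (nbhd V E x)) else 0)"

definition is_coupling :: "'a set \<Rightarrow> ('a \<Rightarrow> real) \<Rightarrow> ('a \<Rightarrow> real) \<Rightarrow> ('a \<Rightarrow> 'a \<Rightarrow> real) \<Rightarrow> bool" where
  "is_coupling V m1 m2 A \<longleftrightarrow> (\<forall>x\<in>V. \<forall>y\<in>V. 0 \<le> A x y \<and> A x y \<le> 1)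
     \<and> (\<forall>x\<in>V. (\<Sum>y\<in>V. A x y) = m1 x) \<and> (\<forall>y\<in>V. (\<Sum>x\<in>V. A x y) = m2 y)"

definition transport_dist :: "'a set \<Rightarrow> ('a \<Rightarrow> 'a \<Rightarrow> bool) \<Rightarrow> ('a \<Rightarrow> real) \<Rightarrow> ('a \<Rightarrow> real) \<Rightarrow> real" where
  "transport_dist V E m1 m2 =
     Inf {(\<Sum>x\<in>V. \<Sum>y\<in>V. A x y * real (gdist E x y)) | A. is_coupling V m1 m2 A}"

definition kappa :: "'a set \<Rightarrow> ('a \<Rightarrow> 'a \<Rightarrow> bool) \<Rightarrow> real \<Rightarrow> 'a \<Rightarrow> 'a \<Rightarrow> real" where
  "kappa V E \<alpha> x y = 1 - transport_dist V E (lazy_walk V E \<alpha> x) (lazy_walk V E \<alpha> y) / real (gdist E x y)"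

definition kappa_LLY :: "'a set \<Rightarrow> ('a \<Rightarrow> 'a \<Rightarrow> bool) \<Rightarrow> 'a \<Rightarrow> 'a \<Rightarrow> real" where
  "kappa_LLY V E x y = Lim (at_left 1) (\<lambda>\<alpha>. kappa V E \<alpha> x y / (1 - \<alpha>))"

end

theory Submission
  imports Defs
begin

text \<open>
  Suppose there is no such matching. Both \<open>N(u) - {v}\<close> and \<open>N(v) - {u}\<close> have \<open>d - 1\<close>
  elements, so by Hall's theorem some \<open>S \<subseteq> N(u) - {v}\<close> has fewer neighbours \<open>T\<close> in
  \<open>N(v) - {u}\<close> than elements. The function that is \<open>1\<close> at \<open>u\<close>, \<open>2\<close> on \<open>S\<close>, \<open>1\<close> on \<open>T\<close>,
  \<open>-1\<close> on the rest of \<open>N(v)\<close> and \<open>0\<close> elsewhere is 1-Lipschitz on the supports of the two lazy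
  walks: triangle-freeness separates \<open>N(u)\<close> from \<open>N(v)\<close>, and pentagon-freeness puts \<open>S\<close> at
  distance \<open>3\<close> from \<open>N(v) - {u} - T\<close>. Its mean under \<open>m\<^sub>u\<close> exceeds its mean under \<open>m\<^sub>v\<close> by
  at least \<open>1\<close> because \<open>|T| < |S|\<close>, so by Kantorovich duality \<open>W \<ge> 1\<close> and \<open>\<kappa>\<^sub>\<alpha>(u,v) \<le> 0\<close>
  for all \<open>\<alpha>\<close>. Since \<open>\<kappa>\<^sub>\<alpha>/(1 - \<alpha>)\<close> is nondecreasing in \<open>\<alpha>\<close>, its limit exists and is \<open>\<le> 0\<close>.
\<close>

section \<open>Hall's theorem\<close>

definition hall_condition :: "('a \<Rightarrow> 'b \<Rightarrow> bool) \<Rightarrow> 'a set \<Rightarrow> 'b set \<Rightarrow> bool" where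
  "hall_condition R A B \<longleftrightarrow> (\<forall>S\<subseteq>A. card S \<le> card {y\<in>B. \<exists>x\<in>S. R x y})"

lemma hall_condition_Diff_tight:
  assumes hall: "hall_condition R A B" and "finite A" "finite B" "S \<subseteq> A"
    and tight: "card {y\<in>B. \<exists>x\<in>S. R x y} = card S"
  shows "hall_condition R (A - S) (B - {y\<in>B. \<exists>x\<in>S. R x y})"
  unfolding hall_condition_def
proof (intro allI impI)
  fix T assume T: "T \<subseteq> A - S"
  define N where "N = {y\<in>B. \<exists>x\<in>S. R x y}"
  define NTS where "NTS = {y\<in>B. \<exists>x\<in>T \<union> S. R x y}"
  have fin: "finite T" "finite S" "finite NTS"
    using finite_subset[OF T] finite_subset[OF \<open>S \<subseteq> A\<close>] \<open>finite A\<close> \<open>finite B\<close>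
    unfolding NTS_def by auto
  have "T \<union> S \<subseteq> A" "N \<subseteq> NTS" using T \<open>S \<subseteq> A\<close> by (auto simp: N_def NTS_def)
  have "card T + card S = card (T \<union> S)"
    using T fin by (intro card_Un_disjoint[symmetric]) auto
  also have "\<dots> \<le> card NTS"
    using hall \<open>T \<union> S \<subseteq> A\<close> unfolding hall_condition_def NTS_def by blast
  also have "\<dots> = card (NTS - N) + card N"
    using fin(3) \<open>N \<subseteq> NTS\<close> card_mono[of NTS N] card_Diff_subset[of N NTS]
      finite_subset[of N NTS] by simp
  also have "NTS - N = {y\<in>B - N. \<exists>x\<in>T. R x y}"
    by (auto simp: NTS_def N_def)
  finally show "card T \<le> card {y\<in>B - N. \<exists>x\<in>T. R x y}"
    using tight unfolding N_def by simp
qed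

lemma hall_condition_Diff_surplus:
  assumes "finite B" "a \<in> A"
    and surplus: "\<And>S. S \<subseteq> A \<Longrightarrow> S \<noteq> {} \<Longrightarrow> S \<noteq> A \<Longrightarrow> card S < card {y\<in>B. \<exists>x\<in>S. R x y}"
  shows "hall_condition R (A - {a}) (B - {b})"
  unfolding hall_condition_def
proof (intro allI impI)
  fix T assume T: "T \<subseteq> A - {a}"
  show "card T \<le> card {y\<in>B - {b}. \<exists>x\<in>T. R x y}"
  proof (cases "T = {}")
    case False
    with T \<open>a \<in> A\<close> have "card T < card {y\<in>B. \<exists>x\<in>T. R x y}"
      by (intro surplus) auto
    moreover have "card {y\<in>B. \<exists>x\<in>T. R x y} \<le> card (insert b {y\<in>B - {b}. \<exists>x\<in>T. R x y})"
      using \<open>finite B\<close> by (intro card_mono) auto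
    moreover have "card (insert b {y\<in>B - {b}. \<exists>x\<in>T. R x y}) \<le> Suc (card {y\<in>B - {b}. \<exists>x\<in>T. R x y})"
      using \<open>finite B\<close> by (simp add: card_insert_if)
    ultimately show ?thesis by linarith
  qed simp
qed

definition matching_into :: "('a \<Rightarrow> 'b \<Rightarrow> bool) \<Rightarrow> 'a set \<Rightarrow> 'b set \<Rightarrow> ('a \<Rightarrow> 'b) \<Rightarrow> bool" where
  "matching_into R A B f \<longleftrightarrow> inj_on f A \<and> (\<forall>x\<in>A. f x \<in> B \<and> R x (f x))"

lemma matching_into_glue:
  assumes "matching_into R S B f" "matching_into R (A - S) (B - {y\<in>B. \<exists>x\<in>S. R x y}) g" "S \<subseteq> A"
  shows "matching_into R A B (\<lambda>x. if x \<in> S then f x else g x)"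
proof -
  define h where "h x = (if x \<in> S then f x else g x)" for x
  have "h ` S \<subseteq> {y\<in>B. \<exists>x\<in>S. R x y}" "h ` (A - S) \<inter> {y\<in>B. \<exists>x\<in>S. R x y} = {}"
    using assms(1,2) unfolding h_def matching_into_def by auto
  then have "inj_on h (S \<union> (A - S))"
    using assms(1,2) unfolding inj_on_Un matching_into_def by (auto simp: h_def inj_on_def)
  moreover have "S \<union> (A - S) = A" using assms(3) by blast
  ultimately show ?thesis
    using assms(1,2) unfolding matching_into_def h_def by auto
qed

lemma matching_into_update:
  assumes "matching_into R (A - {a}) (B - {b}) g" "b \<in> B" "R a b"
  shows "matching_into R (insert a A) B (g(a := b))"
  using assms unfolding matching_into_def by (auto simp: inj_on_def)

theorem hall_matching:
  assumes "finite A" "finite B" "hall_condition R A B"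
  shows "\<exists>f. matching_into R A B f"
  using assms
proof (induction "card A" arbitrary: A B rule: less_induct)
  case less
  show ?case
  proof (cases "\<exists>S. S \<subseteq> A \<and> S \<noteq> {} \<and> S \<noteq> A \<and> card {y\<in>B. \<exists>x\<in>S. R x y} = card S")
    case True
    then obtain S where S: "S \<subseteq> A" "S \<noteq> {}" "S \<noteq> A" "card {y\<in>B. \<exists>x\<in>S. R x y} = card S"
      by blast
    have "finite S" using S(1) less.prems(1) finite_subset by blast
    have "card S < card A" "card (A - S) < card A"
      using S less.prems(1) \<open>finite S\<close> by (auto intro: psubset_card_mono)
    moreover have "hall_condition R S B"
      using less.prems(3) S(1) unfolding hall_condition_def by blast
    ultimately obtain f g where "matching_into R S B f"
      and "matching_into R (A - S) (B - {y\<in>B. \<exists>x\<in>S. R x y}) g"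
      using less.hyps[of S B] less.hyps[of "A - S" "B - {y\<in>B. \<exists>x\<in>S. R x y}"]
        \<open>finite S\<close> less.prems S(1,4) hall_condition_Diff_tight[of R A B S]
      by auto
    then show ?thesis using matching_into_glue S(1) by blast
  next
    case no_tight: False
    have surplus: "card S < card {y\<in>B. \<exists>x\<in>S. R x y}" if "S \<subseteq> A" "S \<noteq> {}" "S \<noteq> A" for S
    proof -
      have "card S \<le> card {y\<in>B. \<exists>x\<in>S. R x y}"
        using less.prems(3) that(1) unfolding hall_condition_def by blast
      moreover have "card {y\<in>B. \<exists>x\<in>S. R x y} \<noteq> card S"
        using no_tight that by blast
      ultimately show ?thesis by linarith
    qed
    show ?thesis
    proof (cases "A = {}")
      case False
      then obtain a where "a \<in> A" by blast
      with less.prems(3) have "card {a} \<le> card {y\<in>B. \<exists>x\<in>{a}. R x y}"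
        unfolding hall_condition_def by blast
      then have "card {y\<in>B. R a y} \<noteq> 0" by simp
      then obtain b where "b \<in> B" "R a b" by (metis (mono_tags, lifting) card.empty empty_Collect_eq)
      have "card (A - {a}) < card A" using less.prems(1) \<open>a \<in> A\<close> by (rule card_Diff1_less)
      then obtain g where "matching_into R (A - {a}) (B - {b}) g"
        using less.hyps less.prems hall_condition_Diff_surplus[OF less.prems(2) \<open>a \<in> A\<close> surplus]
        by blast
      then have "matching_into R (insert a A) B (g(a := b))"
        using \<open>b \<in> B\<close> \<open>R a b\<close> by (rule matching_into_update)
      moreover have "insert a A = A" using \<open>a \<in> A\<close> by blast
      ultimately show ?thesis by auto
    qed (auto simp: matching_into_def)
  qed
qed

corollary hall_bij_betw:
  assumes "finite A" "finite B" "card A = card B" "hall_condition R A B"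
  shows "\<exists>f. bij_betw f A B \<and> (\<forall>x\<in>A. R x (f x))"
proof -
  obtain f where f: "inj_on f A" "\<forall>x\<in>A. f x \<in> B \<and> R x (f x)"
    using hall_matching[OF assms(1,2,4)] unfolding matching_into_def by blast
  then have "f ` A = B"
    using assms(2,3) by (metis card_image card_subset_eq image_subsetI)
  with f show ?thesis unfolding bij_betw_def by blast
qed

section \<open>Couplings and the transportation distance\<close>

definition transport_cost :: "'a set \<Rightarrow> ('a \<Rightarrow> 'a \<Rightarrow> bool) \<Rightarrow> ('a \<Rightarrow> 'a \<Rightarrow> real) \<Rightarrow> real" where
  "transport_cost V E A = (\<Sum>x\<in>V. \<Sum>y\<in>V. A x y * real (gdist E x y))"

lemma transport_dist_eq_Inf_cost:
  "transport_dist V E m1 m2 = Inf {transport_cost V E A | A. is_coupling V m1 m2 A}"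
  unfolding transport_dist_def transport_cost_def ..

lemma transport_cost_nonneg: "is_coupling V m1 m2 A \<Longrightarrow> 0 \<le> transport_cost V E A"
  unfolding is_coupling_def transport_cost_def by (auto intro!: sum_nonneg)

lemma transport_dist_le_cost:
  assumes "is_coupling V m1 m2 A"
  shows "transport_dist V E m1 m2 \<le> transport_cost V E A"
  unfolding transport_dist_eq_Inf_cost
proof (rule cInf_lower)
  show "bdd_below {transport_cost V E A | A. is_coupling V m1 m2 A}"
    by (rule bdd_belowI[of _ 0]) (auto intro: transport_cost_nonneg)
qed (use assms in blast)

lemma transport_dist_greatest:
  assumes "is_coupling V m1 m2 A"
    and "\<And>A. is_coupling V m1 m2 A \<Longrightarrow> c \<le> transport_cost V E A"
  shows "c \<le> transport_dist V E m1 m2"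
  unfolding transport_dist_eq_Inf_cost using assms by (intro cInf_greatest) auto

lemma is_coupling_nonneg: "is_coupling V m1 m2 A \<Longrightarrow> x \<in> V \<Longrightarrow> y \<in> V \<Longrightarrow> 0 \<le> A x y"
  unfolding is_coupling_def by blast

lemma is_coupling_eq_0:
  assumes "finite V" "is_coupling V m1 m2 A" "x \<in> V" "y \<in> V" "m1 x = 0 \<or> m2 y = 0"
  shows "A x y = 0"
  using assms(5)
proof
  assume "m1 x = 0"
  then have "(\<Sum>y\<in>V. A x y) = 0" using assms(2,3) unfolding is_coupling_def by simp
  then show ?thesis
    using assms(1,4) sum_nonneg_eq_0_iff[of V "A x"] is_coupling_nonneg[OF assms(2,3)] by blast
next
  assume "m2 y = 0"
  then have "(\<Sum>x\<in>V. A x y) = 0" using assms(2,4) unfolding is_coupling_def by simp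
  then show ?thesis
    using assms(1,3) sum_nonneg_eq_0_iff[of V "\<lambda>x. A x y"] is_coupling_nonneg[OF assms(2) _ assms(4)]
    by blast
qed

lemma is_coupling_product:
  assumes "\<And>x. 0 \<le> m1 x" "\<And>x. m1 x \<le> 1" "\<And>y. 0 \<le> m2 y" "\<And>y. m2 y \<le> 1"
    and "sum m1 V = 1" "sum m2 V = 1"
  shows "is_coupling V m1 m2 (\<lambda>x y. m1 x * m2 y)"
  using assms by (auto simp: is_coupling_def mult_le_one simp flip: sum_distrib_left sum_distrib_right)

lemma is_coupling_point_masses:
  assumes "finite V" "a \<in> V" "b \<in> V"
  shows "is_coupling V (\<lambda>x. if x = a then 1 else 0) (\<lambda>y. if y = b then 1 else 0)
           (\<lambda>x y. if x = a \<and> y = b then 1 else 0)"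
  unfolding is_coupling_def
proof (intro conjI ballI)
  fix x show "(\<Sum>y\<in>V. if x = a \<and> y = b then 1 else 0) = (if x = a then 1 else (0::real))"
    using assms by (cases "x = a") simp_all
next
  fix y show "(\<Sum>x\<in>V. if x = a \<and> y = b then 1 else 0) = (if y = b then 1 else (0::real))"
    using assms by (cases "y = b") simp_all
qed simp_all

lemma is_coupling_mix:
  assumes "is_coupling V m1 m2 A" "is_coupling V n1 n2 B" "0 \<le> t" "t \<le> 1"
  shows "is_coupling V (\<lambda>x. t * m1 x + (1 - t) * n1 x) (\<lambda>y. t * m2 y + (1 - t) * n2 y)
           (\<lambda>x y. t * A x y + (1 - t) * B x y)"
  using assms unfolding is_coupling_def
  by (auto simp: sum.distrib convex_bound_le simp flip: sum_distrib_left)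

lemma transport_cost_mix:
  "transport_cost V E (\<lambda>x y. t * A x y + (1 - t) * B x y)
     = t * transport_cost V E A + (1 - t) * transport_cost V E B"
  unfolding transport_cost_def by (simp add: distrib_right sum.distrib sum_distrib_left mult.assoc)

lemma transport_cost_point_masses:
  assumes "finite V" "a \<in> V" "b \<in> V"
  shows "transport_cost V E (\<lambda>x y. if x = a \<and> y = b then 1 else 0) = gdist E a b"
proof -
  have "(\<Sum>y\<in>V. (if x = a \<and> y = b then 1 else 0) * real (gdist E x y))
      = (if x = a then real (gdist E a b) else 0)" for x
  proof (cases "x = a")
    case True
    have "(\<Sum>y\<in>V. (if x = a \<and> y = b then 1 else 0) * real (gdist E x y))
        = (\<Sum>y\<in>V. if y = b then real (gdist E a b) else 0)"
      by (rule sum.cong) (auto simp: True)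
    then show ?thesis using assms True by simp
  qed simp
  then show ?thesis using assms unfolding transport_cost_def by simp
qed

lemma transport_cost_ge_potential_gap:
  assumes "finite V" "is_coupling V m1 m2 A"
    and lip: "\<And>x y. x \<in> V \<Longrightarrow> y \<in> V \<Longrightarrow> m1 x \<noteq> 0 \<Longrightarrow> m2 y \<noteq> 0 \<Longrightarrow> \<phi> x - \<phi> y \<le> real (gdist E x y)"
  shows "(\<Sum>x\<in>V. \<phi> x * m1 x) - (\<Sum>y\<in>V. \<phi> y * m2 y) \<le> transport_cost V E A"
proof -
  have marg: "(\<Sum>y\<in>V. A x y) = m1 x" if "x \<in> V" for x
    using assms(2) that unfolding is_coupling_def by blast
  have marg': "(\<Sum>x\<in>V. A x y) = m2 y" if "y \<in> V" for y
    using assms(2) that unfolding is_coupling_def by blast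
  have "(\<Sum>x\<in>V. \<phi> x * m1 x) - (\<Sum>y\<in>V. \<phi> y * m2 y)
      = (\<Sum>x\<in>V. \<Sum>y\<in>V. \<phi> x * A x y) - (\<Sum>y\<in>V. \<Sum>x\<in>V. \<phi> y * A x y)"
    by (auto intro!: sum.cong simp: marg marg' simp flip: sum_distrib_left)
  also have "\<dots> = (\<Sum>x\<in>V. \<Sum>y\<in>V. A x y * (\<phi> x - \<phi> y))"
    by (subst sum.swap[of _ V V]) (simp add: algebra_simps sum_subtractf)
  also have "\<dots> \<le> transport_cost V E A"
    unfolding transport_cost_def
  proof (intro sum_mono)
    fix x y assume "x \<in> V" "y \<in> V"
    show "A x y * (\<phi> x - \<phi> y) \<le> A x y * real (gdist E x y)"
    proof (cases "m1 x = 0 \<or> m2 y = 0")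
      case True
      then show ?thesis using is_coupling_eq_0[OF assms(1,2) \<open>x \<in> V\<close> \<open>y \<in> V\<close>] by simp
    next
      case False
      then show ?thesis
        using lip \<open>x \<in> V\<close> \<open>y \<in> V\<close> is_coupling_nonneg[OF assms(2)] by (simp add: mult_left_mono)
    qed
  qed
  finally show ?thesis .
qed

lemma transport_dist_ge_potential_gap:
  assumes "finite V" "is_coupling V m1 m2 A"
    and "\<And>x y. x \<in> V \<Longrightarrow> y \<in> V \<Longrightarrow> m1 x \<noteq> 0 \<Longrightarrow> m2 y \<noteq> 0 \<Longrightarrow> \<phi> x - \<phi> y \<le> real (gdist E x y)"
  shows "(\<Sum>x\<in>V. \<phi> x * m1 x) - (\<Sum>y\<in>V. \<phi> y * m2 y) \<le> transport_dist V E m1 m2"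
  using assms by (intro transport_dist_greatest[OF assms(2)] transport_cost_ge_potential_gap)

section \<open>Lazy random walks on a connected simple graph\<close>

lemma lazy_walk_interpolate:
  assumes "a < 1"
  shows "lazy_walk V E b x = (\<lambda>w. (1 - b) / (1 - a) * lazy_walk V E a x w
                                  + (1 - (1 - b) / (1 - a)) * (if w = x then 1 else 0))"
proof
  fix w
  define t where "t = (1 - b) / (1 - a)"
  have t: "t * (1 - a) = 1 - b" using assms by (simp add: t_def)
  then have "b = t * a + (1 - t)" by (simp add: algebra_simps)
  moreover have "(1 - b) / k = t * ((1 - a) / k)" for k :: real
    using t by (simp only: times_divide_eq_right)
  ultimately have "lazy_walk V E b x w = t * lazy_walk V E a x w + (1 - t) * (if w = x then 1 else 0)"
    unfolding lazy_walk_def by auto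
  then show "lazy_walk V E b x w = (1 - b) / (1 - a) * lazy_walk V E a x w
               + (1 - (1 - b) / (1 - a)) * (if w = x then 1 else 0)"
    by (simp only: t_def)
qed

lemma relpowp_less_3_cases:
  assumes "n < 3" "(R ^^ n) x y"
  shows "x = y \<or> R x y \<or> (\<exists>z. R x z \<and> R z y)"
proof -
  have "n = 0 \<or> n = 1 \<or> n = 2" using assms(1) by linarith
  then show ?thesis using assms(2) by (auto simp: numeral_2_eq_2 relpowp_Suc_right)
qed

locale connected_simple_graph =
  fixes V :: "'a set" and E :: "'a \<Rightarrow> 'a \<Rightarrow> bool"
  assumes simple: "simple_graph V E" and connected: "connected_graph V E"
begin

lemma finite_vertices: "finite V"
  using simple unfolding simple_graph_def by blast

lemma adj_vertices: "E x y \<Longrightarrow> x \<in> V" "E x y \<Longrightarrow> y \<in> V"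
  using simple unfolding simple_graph_def by blast+

lemma adj_sym: "E x y \<Longrightarrow> E y x"
  using simple unfolding simple_graph_def by blast

lemma adj_irrefl: "\<not> E x x"
  using simple unfolding simple_graph_def by blast

lemma mem_nbhd_iff [simp]: "w \<in> nbhd V E x \<longleftrightarrow> E x w"
  unfolding nbhd_def using adj_vertices by auto

lemma finite_nbhd: "finite (nbhd V E x)"
  using finite_vertices unfolding nbhd_def by simp

lemma gdist_ge:
  assumes "x \<in> V" "y \<in> V" "\<And>n. n < k \<Longrightarrow> \<not> (E ^^ n) x y"
  shows "k \<le> gdist E x y"
proof -
  obtain n where "(E ^^ n) x y"
    using connected assms(1,2) unfolding connected_graph_def by blast
  then have "(E ^^ gdist E x y) x y" unfolding gdist_def by (rule LeastI)
  then show ?thesis using assms(3) by (meson not_le)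
qed

lemma gdist_adj: "E x y \<Longrightarrow> gdist E x y = 1"
proof (rule antisym)
  assume "E x y"
  then show "gdist E x y \<le> 1" unfolding gdist_def by (intro Least_le) (simp add: eq_OO)
  show "1 \<le> gdist E x y"
    using \<open>E x y\<close> adj_vertices adj_irrefl by (intro gdist_ge) auto
qed

lemma gdist_ge_1: "x \<in> V \<Longrightarrow> y \<in> V \<Longrightarrow> x \<noteq> y \<Longrightarrow> 1 \<le> gdist E x y"
  by (rule gdist_ge) auto

lemma gdist_ge_2: "x \<in> V \<Longrightarrow> y \<in> V \<Longrightarrow> x \<noteq> y \<Longrightarrow> \<not> E x y \<Longrightarrow> 2 \<le> gdist E x y"
  by (rule gdist_ge) (auto simp: numeral_2_eq_2 less_Suc_eq eq_OO)

lemma gdist_ge_3: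
  assumes "x \<in> V" "y \<in> V" "x \<noteq> y" "\<not> E x y" "\<And>z. E x z \<Longrightarrow> \<not> E z y"
  shows "3 \<le> gdist E x y"
  using assms relpowp_less_3_cases[of _ E x y] by (intro gdist_ge) blast+

lemma lazy_walk_support: "lazy_walk V E \<alpha> x w \<noteq> 0 \<Longrightarrow> w = x \<or> E x w"
  unfolding lazy_walk_def by (auto split: if_splits)

lemma lazy_walk_nonneg: "0 \<le> \<alpha> \<Longrightarrow> \<alpha> \<le> 1 \<Longrightarrow> 0 \<le> lazy_walk V E \<alpha> x w"
  unfolding lazy_walk_def by simp

lemma lazy_walk_le_1:
  assumes "0 \<le> \<alpha>" "\<alpha> \<le> 1"
  shows "lazy_walk V E \<alpha> x w \<le> 1"
proof (cases "w \<noteq> x \<and> E x w")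
  case True
  then have "1 \<le> real (card (nbhd V E x))"
    using finite_nbhd[of x] card_0_eq[of "nbhd V E x"] by fastforce
  then have "(1 - \<alpha>) / real (card (nbhd V E x)) \<le> 1 - \<alpha>"
    using assms by (simp add: divide_le_eq mult_le_cancel_left1 order_trans)
  then show ?thesis using assms True unfolding lazy_walk_def by auto
qed (use assms in \<open>auto simp: lazy_walk_def\<close>)

lemma sum_lazy_walk_weighted:
  assumes "x \<in> V"
  shows "(\<Sum>w\<in>V. h w * lazy_walk V E \<alpha> x w)
           = \<alpha> * h x + (1 - \<alpha>) / real (card (nbhd V E x)) * (\<Sum>w\<in>nbhd V E x. h w)"
proof -
  define c where "c = (1 - \<alpha>) / real (card (nbhd V E x))"
  have "h w * lazy_walk V E \<alpha> x w = (if w = x then \<alpha> * h x else 0) + (if E x w then c * h w else 0)" for w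
    using adj_irrefl[of x] by (auto simp: lazy_walk_def c_def)
  then have "(\<Sum>w\<in>V. h w * lazy_walk V E \<alpha> x w)
      = (\<Sum>w\<in>V. if w = x then \<alpha> * h x else 0) + (\<Sum>w\<in>V. if E x w then c * h w else 0)"
    by (simp add: sum.distrib)
  also have "\<dots> = \<alpha> * h x + (\<Sum>w\<in>nbhd V E x. c * h w)"
    using assms finite_vertices by (simp add: nbhd_def sum.inter_filter)
  finally show ?thesis by (simp add: c_def sum_distrib_left)
qed

lemma sum_lazy_walk:
  assumes "x \<in> V" "nbhd V E x \<noteq> {}"
  shows "(\<Sum>w\<in>V. lazy_walk V E \<alpha> x w) = 1"
  using sum_lazy_walk_weighted[OF assms(1), of "\<lambda>_. 1" \<alpha>] finite_nbhd[of x] assms(2) by simp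

lemma lazy_walks_coupling:
  assumes "0 \<le> \<alpha>" "\<alpha> \<le> 1" "x \<in> V" "y \<in> V" "nbhd V E x \<noteq> {}" "nbhd V E y \<noteq> {}"
  shows "is_coupling V (lazy_walk V E \<alpha> x) (lazy_walk V E \<alpha> y)
           (\<lambda>a b. lazy_walk V E \<alpha> x a * lazy_walk V E \<alpha> y b)"
  using assms by (intro is_coupling_product lazy_walk_nonneg lazy_walk_le_1 sum_lazy_walk)

text \<open>The walk with laziness \<open>b\<close> is a mixture of the one with laziness \<open>a\<close> and a point mass, so
  mixing couplings bounds the transportation distance.\<close>

lemma transport_dist_lazy_walk_le:
  assumes "x \<in> V" "y \<in> V" "nbhd V E x \<noteq> {}" "nbhd V E y \<noteq> {}" "0 \<le> a" "a \<le> b" "b < 1"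
  defines "t \<equiv> (1 - b) / (1 - a)"
  shows "transport_dist V E (lazy_walk V E b x) (lazy_walk V E b y)
           \<le> t * transport_dist V E (lazy_walk V E a x) (lazy_walk V E a y) + (1 - t) * gdist E x y"
proof -
  have "a < 1" "0 < t" "t \<le> 1" using assms(5-7) unfolding t_def by auto
  define W where "W = transport_dist V E (lazy_walk V E b x) (lazy_walk V E b y)"
  have "(W - (1 - t) * gdist E x y) / t \<le> transport_cost V E P"
    if P: "is_coupling V (lazy_walk V E a x) (lazy_walk V E a y) P" for P
  proof -
    define Q where "Q p q = t * P p q + (1 - t) * (if p = x \<and> q = y then 1 else 0)" for p q
    have "is_coupling V (lazy_walk V E b x) (lazy_walk V E b y) Q"
      unfolding lazy_walk_interpolate[OF \<open>a < 1\<close>, where b = b] t_def[symmetric] Q_def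
      using is_coupling_mix[OF P is_coupling_point_masses[OF finite_vertices assms(1,2)]]
        \<open>0 < t\<close> \<open>t \<le> 1\<close> by simp
    then have "W \<le> transport_cost V E Q" unfolding W_def by (rule transport_dist_le_cost)
    also have "\<dots> = t * transport_cost V E P + (1 - t) * gdist E x y"
      unfolding Q_def transport_cost_mix transport_cost_point_masses[OF finite_vertices assms(1,2)] ..
    finally show ?thesis using \<open>0 < t\<close> by (simp add: pos_divide_le_eq algebra_simps)
  qed
  then have "(W - (1 - t) * gdist E x y) / t \<le> transport_dist V E (lazy_walk V E a x) (lazy_walk V E a y)"
    using lazy_walks_coupling[OF assms(5) _ assms(1-4)] \<open>a < 1\<close> by (intro transport_dist_greatest) auto
  then show ?thesis using \<open>0 < t\<close> unfolding W_def by (simp add: pos_divide_le_eq algebra_simps)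
qed

lemma kappa_div_mono:
  assumes "x \<in> V" "y \<in> V" "x \<noteq> y" "nbhd V E x \<noteq> {}" "nbhd V E y \<noteq> {}" "0 \<le> a" "a \<le> b" "b < 1"
  shows "kappa V E a x y / (1 - a) \<le> kappa V E b x y / (1 - b)"
proof -
  define t where "t = (1 - b) / (1 - a)"
  define D where "D = real (gdist E x y)"
  have "0 < D" using gdist_ge_1[OF assms(1-3)] unfolding D_def by simp
  define W where "W c = transport_dist V E (lazy_walk V E c x) (lazy_walk V E c y)" for c
  have "W b / D \<le> (t * W a + (1 - t) * D) / D"
    using transport_dist_lazy_walk_le[OF assms(1,2,4-8)] \<open>0 < D\<close>
    unfolding W_def t_def D_def by (simp add: divide_right_mono)
  also have "\<dots> = t * W a / D + (1 - t)"
    using \<open>0 < D\<close> by (simp add: add_divide_distrib)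
  finally have "t * kappa V E a x y \<le> kappa V E b x y"
    unfolding kappa_def W_def[symmetric] D_def[symmetric] by (simp add: right_diff_distrib)
  moreover have "kappa V E a x y / (1 - a) = t * kappa V E a x y / (1 - b)"
    using assms(6-8) unfolding t_def by simp
  ultimately show ?thesis using assms(8) by (simp add: divide_right_mono)
qed

end

section \<open>Curvature of an edge violating Hall's condition\<close>

text \<open>\<open>Lim\<close> is a definite description, so monotonicity is what makes the limit exist at all.\<close>

lemma Lim_at_left_le_of_mono:
  fixes g :: "real \<Rightarrow> real"
  assumes "a < c"
    and mono: "\<And>x y. a \<le> x \<Longrightarrow> x \<le> y \<Longrightarrow> y < c \<Longrightarrow> g x \<le> g y"
    and bound: "\<And>x. a \<le> x \<Longrightarrow> x < c \<Longrightarrow> g x \<le> K"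
  shows "Lim (at_left c) g \<le> K"
proof -
  have "(g \<longlongrightarrow> Sup (g ` ({..<c} \<inter> {a..}))) (at c within {..<c} \<inter> {a..})"
    by (rule Lim_left_bound[where K = K]) (auto intro: mono bound)
  moreover have "at c within ({..<c} \<inter> {a..}) = at_left c"
    by (rule at_within_nhd[of _ "{a<..}"]) (use assms(1) in auto)
  ultimately have "Lim (at_left c) g = Sup (g ` ({..<c} \<inter> {a..}))"
    by (intro tendsto_Lim) auto
  also have "\<dots> \<le> K"
    by (rule cSup_least) (use assms in auto)
  finally show ?thesis .
qed

locale deficient_edge = connected_simple_graph +
  fixes u v :: 'a and S :: "'a set"
  assumes triangle_free: "\<not> has_C3 V E" and pentagon_free: "\<not> has_C5 V E"
    and adj_uv: "E u v"
    and equal_degrees: "card (nbhd V E u) = card (nbhd V E v)"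
    and S_subset: "S \<subseteq> nbhd V E u - {v}"
    and deficient: "card {y \<in> nbhd V E v - {u}. \<exists>x\<in>S. E x y} < card S"
begin

definition T :: "'a set" where
  "T = {y \<in> nbhd V E v - {u}. \<exists>x\<in>S. E x y}"

definition potential :: "'a \<Rightarrow> real" where
  "potential z = (if z = u then 1 else if z \<in> S then 2 else if z \<in> T then 1 else if E v z then -1 else 0)"

lemma uv_vertices: "u \<in> V" "v \<in> V"
  using adj_uv adj_vertices by auto

lemma uv_in_nbhds: "v \<in> nbhd V E u" "u \<in> nbhd V E v"
  using adj_uv adj_sym by auto

lemma no_triangle: "E x y \<Longrightarrow> E y z \<Longrightarrow> \<not> E z x"
  using triangle_free adj_irrefl unfolding has_C3_def by (metis distinct_length_2_or_more distinct_singleton)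

lemma no_pentagon: "distinct [a, b, c, p, q] \<Longrightarrow> E a b \<Longrightarrow> E b c \<Longrightarrow> E c p \<Longrightarrow> E p q \<Longrightarrow> \<not> E q a"
  using pentagon_free unfolding has_C5_def by blast

lemma no_common_nbr: "E u x \<Longrightarrow> \<not> E v x"
  using no_triangle adj_sym adj_uv by blast

lemma S_far_from_unmatched:
  assumes "x \<in> S" "E v y" "y \<noteq> u" "y \<notin> T"
  shows "3 \<le> gdist E x y"
proof (rule gdist_ge_3)
  have "E u x" "x \<noteq> v" using assms(1) S_subset by auto
  show "x \<in> V" "y \<in> V" using \<open>E u x\<close> assms(2) adj_vertices by auto
  show "x \<noteq> y" using \<open>E u x\<close> assms(2) no_common_nbr by blast
  show "\<not> E x y" using assms unfolding T_def by auto
  show "\<not> E z y" if "E x z" for z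
  proof
    assume "E z y"
    have "z \<noteq> u" using \<open>E z y\<close> assms(2,3) no_common_nbr adj_sym by blast
    moreover have "z \<noteq> v" using \<open>E u x\<close> \<open>E x z\<close> no_common_nbr adj_sym by blast
    moreover have "distinct [u, x, z, y, v]"
      using calculation \<open>E u x\<close> \<open>x \<noteq> v\<close> \<open>x \<noteq> y\<close> \<open>E x z\<close> \<open>E z y\<close> assms(2,3) adj_irrefl adj_uv
      by auto
    ultimately show False
      using no_pentagon \<open>E u x\<close> \<open>E x z\<close> \<open>E z y\<close> assms(2) adj_sym adj_uv by blast
  qed
qed

lemma potential_u: "potential u = 1"
  unfolding potential_def by simp

lemma potential_S: "x \<in> S \<Longrightarrow> potential x = 2"
  using S_subset adj_irrefl unfolding potential_def by auto

lemma potential_nbhd_u: "E u x \<Longrightarrow> x \<notin> S \<Longrightarrow> potential x = 0"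
  using no_common_nbr adj_irrefl unfolding potential_def T_def by auto

lemma potential_nbhd_v: "E v y \<Longrightarrow> y \<noteq> u \<Longrightarrow> potential y = (if y \<in> T then 1 else -1)"
  using S_subset no_common_nbr unfolding potential_def by auto

lemma potential_v: "potential v = 0"
  using adj_uv potential_nbhd_u S_subset by auto

lemma potential_ge: "-1 \<le> potential z"
  unfolding potential_def by simp

lemma potential_lipschitz:
  assumes "x = u \<or> E u x" "y = v \<or> E v y"
  shows "potential x - potential y \<le> gdist E x y"
proof (cases "x = y")
  case False
  have "x \<in> V" "y \<in> V" using assms adj_uv adj_vertices by auto
  have gdist_1: "1 \<le> real (gdist E x y)"
    using gdist_ge_1[OF \<open>x \<in> V\<close> \<open>y \<in> V\<close> False] by simp
  have gdist_2: "2 \<le> real (gdist E x y)" if "\<not> E x y"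
    using gdist_ge_2[OF \<open>x \<in> V\<close> \<open>y \<in> V\<close> False that] by simp
  consider "x = u" | "E u x" "x \<notin> S" | "x \<in> S"
    using assms(1) by blast
  then show ?thesis
  proof cases
    case 1
    show ?thesis
    proof (cases "y = v")
      case False
      then have "\<not> E x y" using 1 assms(2) no_common_nbr adj_sym by blast
      then show ?thesis using 1 gdist_2 potential_u potential_ge[of y] by simp
    qed (use 1 gdist_1 potential_u potential_v in simp)
  next
    case 2
    then show ?thesis using gdist_1 potential_nbhd_u potential_ge[of y] by simp
  next
    case 3
    then have "E u x" "potential x = 2" using S_subset potential_S by auto
    consider "y = v" | "y = u" | "E v y" "y \<noteq> u" "y \<in> T" | "E v y" "y \<noteq> u" "y \<notin> T"
      using assms(2) by blast
    then show ?thesis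
    proof cases
      case 1
      then have "\<not> E x y" using \<open>E u x\<close> no_common_nbr adj_sym by blast
      then show ?thesis using 1 gdist_2 \<open>potential x = 2\<close> potential_v by simp
    next
      case 2
      then show ?thesis using gdist_1 \<open>potential x = 2\<close> potential_u by simp
    next
      case 3
      then show ?thesis using gdist_1 \<open>potential x = 2\<close> potential_nbhd_v by simp
    next
      case 4
      then show ?thesis
        using S_far_from_unmatched[OF \<open>x \<in> S\<close>] \<open>potential x = 2\<close> potential_nbhd_v by fastforce
    qed
  qed
qed simp

lemma sum_potential_nbhd_u: "(\<Sum>z\<in>nbhd V E u. potential z) = 2 * real (card S)"
proof -
  have "(\<Sum>z\<in>nbhd V E u. potential z) = (\<Sum>z\<in>nbhd V E u. if z \<in> S then 2 else 0)"
    using potential_S potential_nbhd_u by (intro sum.cong) auto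
  also have "\<dots> = (\<Sum>z\<in>nbhd V E u \<inter> S. 2)"
    by (rule sum.inter_restrict[OF finite_nbhd, symmetric])
  also have "nbhd V E u \<inter> S = S" using S_subset by blast
  finally show ?thesis by simp
qed

lemma sum_potential_nbhd_v:
  "(\<Sum>z\<in>nbhd V E v. potential z) = 2 + 2 * real (card T) - real (card (nbhd V E v))"
proof -
  define B where "B = nbhd V E v - {u}"
  have "finite B" "u \<notin> B" using finite_nbhd unfolding B_def by auto
  have "nbhd V E v = insert u B" using adj_uv adj_sym unfolding B_def by auto
  then have "card (nbhd V E v) = card B + 1" using \<open>finite B\<close> \<open>u \<notin> B\<close> by simp
  have "(\<Sum>z\<in>B. potential z) = (\<Sum>z\<in>B. (if z \<in> T then 2 else 0) - 1)"
    using potential_nbhd_v unfolding B_def by (intro sum.cong) auto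
  also have "\<dots> = (\<Sum>z\<in>B. if z \<in> T then 2 else 0) - real (card B)"
    by (simp add: sum_subtractf)
  also have "(\<Sum>z\<in>B. if z \<in> T then 2 else 0) = (\<Sum>z\<in>B \<inter> T. (2::real))"
    by (rule sum.inter_restrict[OF \<open>finite B\<close>, symmetric])
  also have "B \<inter> T = T" unfolding B_def T_def by blast
  finally show ?thesis
    using \<open>nbhd V E v = insert u B\<close> \<open>card (nbhd V E v) = card B + 1\<close> \<open>finite B\<close> \<open>u \<notin> B\<close>
      potential_u by simp
qed

lemma potential_mean_gap:
  assumes "0 \<le> \<alpha>" "\<alpha> \<le> 1"
  shows "1 \<le> (\<Sum>x\<in>V. potential x * lazy_walk V E \<alpha> u x) - (\<Sum>y\<in>V. potential y * lazy_walk V E \<alpha> v y)"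
proof -
  define d where "d = real (card (nbhd V E v))"
  define c where "c = (1 - \<alpha>) / d"
  have "0 < d" using finite_nbhd[of v] uv_in_nbhds(2) unfolding d_def by (simp add: card_gt_0_iff, blast)
  have "(\<Sum>x\<in>V. potential x * lazy_walk V E \<alpha> u x) = \<alpha> + c * (2 * real (card S))"
    using sum_lazy_walk_weighted[OF uv_vertices(1)] equal_degrees
    by (simp add: potential_u sum_potential_nbhd_u c_def d_def)
  moreover have "(\<Sum>y\<in>V. potential y * lazy_walk V E \<alpha> v y) = c * (2 + 2 * real (card T) - d)"
    using sum_lazy_walk_weighted[OF uv_vertices(2)]
    by (simp add: potential_v sum_potential_nbhd_v c_def d_def)
  moreover have "0 \<le> c * (real (card S) - real (card T) - 1)"
    using deficient assms \<open>0 < d\<close> unfolding T_def c_def by simp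
  moreover have "c * d = 1 - \<alpha>" using \<open>0 < d\<close> unfolding c_def by simp
  ultimately show ?thesis
    by (simp add: right_diff_distrib distrib_left)
qed

lemma transport_dist_ge_1:
  assumes "0 \<le> \<alpha>" "\<alpha> \<le> 1"
  shows "1 \<le> transport_dist V E (lazy_walk V E \<alpha> u) (lazy_walk V E \<alpha> v)"
proof -
  have "nbhd V E u \<noteq> {}" "nbhd V E v \<noteq> {}" using uv_in_nbhds by blast+
  have "potential x - potential y \<le> gdist E x y"
    if "lazy_walk V E \<alpha> u x \<noteq> 0" "lazy_walk V E \<alpha> v y \<noteq> 0" for x y
    using lazy_walk_support[OF that(1)] lazy_walk_support[OF that(2)] by (rule potential_lipschitz)
  then have "(\<Sum>x\<in>V. potential x * lazy_walk V E \<alpha> u x) - (\<Sum>y\<in>V. potential y * lazy_walk V E \<alpha> v y)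
      \<le> transport_dist V E (lazy_walk V E \<alpha> u) (lazy_walk V E \<alpha> v)"
    using lazy_walks_coupling[OF assms uv_vertices \<open>nbhd V E u \<noteq> {}\<close> \<open>nbhd V E v \<noteq> {}\<close>]
    by (intro transport_dist_ge_potential_gap[OF finite_vertices]) auto
  with potential_mean_gap[OF assms] show ?thesis by linarith
qed

lemma kappa_nonpos: "0 \<le> \<alpha> \<Longrightarrow> \<alpha> \<le> 1 \<Longrightarrow> kappa V E \<alpha> u v \<le> 0"
  using transport_dist_ge_1 gdist_adj[OF adj_uv] unfolding kappa_def by simp

lemma kappa_LLY_nonpos: "kappa_LLY V E u v \<le> 0"
  unfolding kappa_LLY_def
proof (rule Lim_at_left_le_of_mono[of 0])
  have "u \<noteq> v" "nbhd V E u \<noteq> {}" "nbhd V E v \<noteq> {}"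
    using adj_uv adj_irrefl uv_in_nbhds by blast+
  then show "kappa V E a u v / (1 - a) \<le> kappa V E b u v / (1 - b)" if "0 \<le> a" "a \<le> b" "b < 1" for a b
    using kappa_div_mono uv_vertices that by blast
  show "kappa V E a u v / (1 - a) \<le> 0" if "0 \<le> a" "a < 1" for a
    using kappa_nonpos[of a] that by (simp add: divide_nonpos_pos)
qed simp

end

theorem lemma2p3:
  fixes V :: "'a set" and E :: "'a \<Rightarrow> 'a \<Rightarrow> bool" and d :: nat and u v :: 'a
  assumes "simple_graph V E" and "connected_graph V E" and "regular_graph V E d"
    and "\<not> has_C3 V E" and "\<not> has_C5 V E"
    and "E u v" and "kappa_LLY V E u v > 0"
  shows "\<exists>f. bij_betw f (nbhd V E u - {v}) (nbhd V E v - {u})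
              \<and> (\<forall>w \<in> nbhd V E u - {v}. E w (f w))"
proof (rule ccontr)
  assume no_matching: "\<not> ?thesis"
  interpret connected_simple_graph V E using assms(1,2) by unfold_locales
  have "v \<in> nbhd V E u" "u \<in> nbhd V E v" using assms(6) adj_sym by auto
  have equal_degrees: "card (nbhd V E u) = card (nbhd V E v)"
    using assms(3) adj_vertices[OF assms(6)] unfolding regular_graph_def by simp
  then have "card (nbhd V E u - {v}) = card (nbhd V E v - {u})"
    using \<open>v \<in> nbhd V E u\<close> \<open>u \<in> nbhd V E v\<close> finite_nbhd by (simp add: card_Diff_singleton)
  then have "\<not> hall_condition E (nbhd V E u - {v}) (nbhd V E v - {u})"
    using hall_bij_betw[of "nbhd V E u - {v}" "nbhd V E v - {u}" E] no_matching finite_nbhd by blast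
  then obtain S where "S \<subseteq> nbhd V E u - {v}" "card {y \<in> nbhd V E v - {u}. \<exists>x\<in>S. E x y} < card S"
    unfolding hall_condition_def by (auto simp: not_le)
  then interpret deficient_edge V E u v S
    using assms(4-6) equal_degrees by unfold_locales
  show False using kappa_LLY_nonpos assms(7) by simp
qed

end
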